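(* For every integer $\ell\geq 3$, $$\mathfrak K(3\cdot 2^{\ell-2}+1)>\frac{5\cdot 2^{2\ell-3}}{3\cdot 2^{\ell-2}+1}\qquad\text{and}\qquad \mathfrak K(2^{\ell-1}+3)>\frac{2^{2\ell-2}}{2^{\ell-1}+3}.$$
   Context: The Thue–Morse word is $\mathbf t=\mathbf t_1\mathbf t_2\cdots$ where $\mathbf t_i\in\{0,1\}$ has the parity of the number of $1$'s in the binary expansion of $i-1$. For positive integers $\alpha\le\beta$, $\langle\alpha,\beta\rangle=\mathbf t_\alpha\cdots\mathbf t_\beta$. A $k$-anti-power is a word $w_1\cdots w_k$ with $w_1,\dots,w_k$ pairwise distinct words of equal length. For a positive integer $m$, $\mathfrak K(m)$ is the smallest positive integer $k$ such that the prefix $\langle 1,km\rangle$ of $\mathbf t$ is not a $k$-anti-power. *)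

theory Defs
  imports Complex_Main
begin

fun bitcount :: "nat \<Rightarrow> nat" where
  "bitcount n = (if n = 0 then 0 else n mod 2 + bitcount (n div 2))"

declare bitcount.simps [simp del]

text \<open>Thue--Morse word, 1-indexed: t_i = parity of the number of 1's in binary expansion of i-1.\<close>
definition tm :: "nat \<Rightarrow> nat" where
  "tm i = bitcount (i - 1) mod 2"

text \<open>Factor <alpha,beta> = t_alpha ... t_beta (empty if beta < alpha).\<close>
definition tm_factor :: "nat \<Rightarrow> nat \<Rightarrow> nat list" where
  "tm_factor a b = map tm [a..<Suc b]"

text \<open>The prefix <1,km> split into k consecutive blocks w_1..w_k of length m;
  it is a k-anti-power iff these blocks are pairwise distinct.\<close>
definition tm_prefix_antipower :: "nat \<Rightarrow> nat \<Rightarrow> bool" where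
  "tm_prefix_antipower k m \<longleftrightarrow>
     (\<forall>i<k. \<forall>j<k. i \<noteq> j \<longrightarrow> tm_factor (i*m + 1) ((i+1)*m) \<noteq> tm_factor (j*m + 1) ((j+1)*m))"

definition KK :: "nat \<Rightarrow> nat" where
  "KK m = (LEAST k. 0 < k \<and> \<not> tm_prefix_antipower k m)"

end

theory Submission
  imports Defs
begin

text \<open>
  Two factors of the Thue--Morse word of length at least \<open>3 \<cdot> 2\<^sup>a + 1\<close> can only agree if
  their starting positions are congruent modulo \<open>2\<^sup>a\<^sup>+\<^sup>1\<close> (desubstitution). For odd \<open>m\<close> the
  blocks of length \<open>m\<close> of the prefix start at multiples of \<open>m\<close>, so two equal blocks \<open>i < j\<close>
  force \<open>2\<^sup>a\<^sup>+\<^sup>1 \<bar> j - i\<close>. For \<open>m = 3X + 1\<close> resp. \<open>m = 2X + 3\<close> with \<open>X = 2\<^sup>s\<close> and a prefix of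
  length at most \<open>10X\<^sup>2\<close> resp. \<open>4X\<^sup>2\<close> this leaves only \<open>j - i = 2\<^sup>a\<^sup>+\<^sup>1\<close>, and there the identity
  \<open>t(R + 2\<^sup>a v) = t(R) + t(v)\<close> (for \<open>R < 2\<^sup>a\<close>, modulo 2) exhibits a letter at which the two
  blocks differ.
\<close>

lemma bitcount_double_plus: "b < 2 \<Longrightarrow> bitcount (2 * x + b) = b + bitcount x"
  by (subst bitcount.simps) (auto simp: bitcount.simps)

lemma bitcount_add_pow2_mult:
  "R < 2 ^ a \<Longrightarrow> bitcount (R + 2 ^ a * v) = bitcount R + bitcount v"
proof (induction a arbitrary: R)
  case 0
  then show ?case by (simp add: bitcount.simps)
next
  case (Suc a)
  have "R + 2 ^ Suc a * v = 2 * (R div 2 + 2 ^ a * v) + R mod 2"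
    by simp
  then have "bitcount (R + 2 ^ Suc a * v) = R mod 2 + bitcount (R div 2 + 2 ^ a * v)"
    by (metis bitcount_double_plus mod_less_divisor zero_less_numeral)
  also have "\<dots> = R mod 2 + bitcount (R div 2) + bitcount v"
    using Suc.prems by (simp add: Suc.IH less_mult_imp_div_less)
  also have "R mod 2 + bitcount (R div 2) = bitcount R"
    using bitcount_double_plus[of "R mod 2" "R div 2"] by simp
  finally show ?case .
qed

text \<open>The Thue--Morse word indexed from 0, with letters as booleans.\<close>
definition thue_morse :: "nat \<Rightarrow> bool" where
  "thue_morse n \<longleftrightarrow> odd (bitcount n)"

lemma tm_Suc: "tm (Suc i) = of_bool (thue_morse i)"
  by (simp add: tm_def thue_morse_def odd_iff_mod_2_eq_one)

lemma thue_morse_small: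
  "\<not> thue_morse 0" "thue_morse 1" "thue_morse 2" "\<not> thue_morse 3" "thue_morse 4"
  by (simp_all add: thue_morse_def bitcount.simps)

lemma thue_morse_double [simp]: "thue_morse (2 * n) = thue_morse n"
  using bitcount_double_plus[of 0 n] by (simp add: thue_morse_def)

lemma thue_morse_double_plus_1 [simp]: "thue_morse (Suc (2 * n)) = (\<not> thue_morse n)"
  using bitcount_double_plus[of 1 n] by (simp add: thue_morse_def)

lemma thue_morse_add_pow2_mult:
  "R < 2 ^ a \<Longrightarrow> thue_morse (R + 2 ^ a * v) = (thue_morse R \<noteq> thue_morse v)"
  by (simp add: thue_morse_def bitcount_add_pow2_mult)

lemma thue_morse_add_pow2_mult_div_mod:
  "thue_morse (N + 2 ^ a * c) = (thue_morse (N mod 2 ^ a) \<noteq> thue_morse (N div 2 ^ a + c))"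
proof -
  have "N + 2 ^ a * c = N mod 2 ^ a + 2 ^ a * (N div 2 ^ a + c)"
    by (simp add: algebra_simps)
  then show ?thesis
    by (simp add: thue_morse_add_pow2_mult)
qed

lemma thue_morse_not_three_equal:
  "\<not> (thue_morse b = thue_morse (b + 1) \<and> thue_morse (b + 1) = thue_morse (b + 2))"
proof (cases "even b")
  case True
  then obtain c where "b = 2 * c" by blast
  then have "thue_morse (b + 1) \<noteq> thue_morse b" by simp
  then show ?thesis by blast
next
  case False
  then obtain c where "b = 2 * c + 1" using oddE by blast
  then have b: "b + 1 = 2 * (c + 1)" "b + 2 = Suc (2 * (c + 1))" by simp_all
  have "thue_morse (b + 2) \<noteq> thue_morse (b + 1)"
    unfolding b using thue_morse_double_plus_1[of "c + 1"] thue_morse_double[of "c + 1"] by argo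
  then show ?thesis by blast
qed

lemma thue_morse_mult_4_plus:
  "thue_morse (4 * w) = thue_morse w" "thue_morse (4 * w + 1) = (\<not> thue_morse w)"
  "thue_morse (4 * w + 2) = (\<not> thue_morse w)" "thue_morse (4 * w + 3) = thue_morse w"
  using thue_morse_add_pow2_mult[of 0 2 w] thue_morse_add_pow2_mult[of 1 2 w]
    thue_morse_add_pow2_mult[of 2 2 w] thue_morse_add_pow2_mult[of 3 2 w]
  by (simp_all add: thue_morse_small[unfolded One_nat_def] add.commute)

lemma exists_thue_morse_eq_add_3:
  "\<exists>v. u \<le> v \<and> v \<le> u + 2 \<and> thue_morse (v + 3) = thue_morse v"
proof -
  have witness: ?thesis
    if "thue_morse (u + 3) = thue_morse u \<or> thue_morse (u + 4) = thue_morse (u + 1)"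
    using that
  proof
    assume "thue_morse (u + 3) = thue_morse u"
    then show ?thesis by (intro exI[of _ u]) simp
  next
    assume "thue_morse (u + 4) = thue_morse (u + 1)"
    then show ?thesis by (intro exI[of _ "u + 1"]) (simp add: add.commute)
  qed
  define w r where "w = u div 4" and "r = u mod 4"
  have u: "u = 4 * w + r" and "r < 4"
    by (simp_all add: w_def r_def)
  note t = thue_morse_mult_4_plus
  \<comment> \<open>for \<open>u mod 4 \<in> {1, 2}\<close> exactly one of the pairs \<open>(u, u + 1)\<close> and \<open>(u + 3, u + 4)\<close> is constant\<close>
  consider "r = 0" | "r = 1" | "r = 2" | "r = 3"
    using \<open>r < 4\<close> by linarith
  then show ?thesis
  proof cases
    case 1
    have "thue_morse u = thue_morse (4 * w)" "thue_morse (u + 3) = thue_morse (4 * w + 3)"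
      by (rule arg_cong[where f = thue_morse]; simp add: u 1)+
    then show ?thesis using t[of w] by (intro witness) argo
  next
    case 2
    have "thue_morse u = thue_morse (4 * w + 1)" "thue_morse (u + 1) = thue_morse (4 * w + 2)"
      "thue_morse (u + 3) = thue_morse (4 * (w + 1))"
      "thue_morse (u + 4) = thue_morse (4 * (w + 1) + 1)"
      by (rule arg_cong[where f = thue_morse]; simp add: u 2)+
    then show ?thesis using t[of w] t[of "w + 1"] by (intro witness) argo
  next
    case 3
    have "thue_morse u = thue_morse (4 * w + 2)" "thue_morse (u + 1) = thue_morse (4 * w + 3)"
      "thue_morse (u + 3) = thue_morse (4 * (w + 1) + 1)"
      "thue_morse (u + 4) = thue_morse (4 * (w + 1) + 2)"
      by (rule arg_cong[where f = thue_morse]; simp add: u 3)+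
    then show ?thesis using t[of w] t[of "w + 1"] by (intro witness) argo
  next
    case 4
    have "thue_morse (u + 1) = thue_morse (4 * (w + 1))"
      "thue_morse (u + 4) = thue_morse (4 * (w + 1) + 3)"
      by (rule arg_cong[where f = thue_morse]; simp add: u 4)+
    then show ?thesis using t[of "w + 1"] by (intro witness) argo
  qed
qed

definition tm_factors_eq :: "nat \<Rightarrow> nat \<Rightarrow> nat \<Rightarrow> bool" where
  "tm_factors_eq p q n \<longleftrightarrow> (\<forall>r<n. thue_morse (p + r) = thue_morse (q + r))"

lemma tm_factors_eq_sym: "tm_factors_eq p q n \<Longrightarrow> tm_factors_eq q p n"
  by (simp add: tm_factors_eq_def)

lemma tm_factors_eq_if_tm_factor_eq:
  assumes "tm_factor (p + 1) (p + n) = tm_factor (q + 1) (q + n)"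
  shows "tm_factors_eq p q n"
  unfolding tm_factors_eq_def
proof (intro allI impI)
  fix r assume "r < n"
  then have "tm_factor (x + 1) (x + n) ! r = tm (Suc (x + r))" for x
    by (simp add: tm_factor_def del: upt_Suc)
  then show "thue_morse (p + r) = thue_morse (q + r)"
    using assms by (metis tm_Suc of_bool_eq_iff)
qed

lemma not_tm_factors_eq_shift:
  assumes "p \<le> N" "N < p + n" "thue_morse N \<noteq> thue_morse (N + d)"
  shows "\<not> tm_factors_eq p (p + d) n"
  using assms unfolding tm_factors_eq_def
  by (metis add.commute add.left_commute le_add_diff_inverse less_diff_conv2)

lemma tm_factors_eq_even_iff:
  assumes "tm_factors_eq p q n" "4 \<le> n"
  shows "even p \<longleftrightarrow> even q"
proof -
  have False if p: "p = 2 * a" and q: "q = 2 * b + 1" and eq: "tm_factors_eq p q n" for p q a b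
  proof -
    have l: "thue_morse (p + r) = thue_morse (q + r)" if "r < 4" for r
      using eq \<open>4 \<le> n\<close> that by (simp add: tm_factors_eq_def)
    have "thue_morse (p + 0) = thue_morse (q + 0)" "thue_morse (p + 1) = thue_morse (q + 1)"
      "thue_morse (p + 2) = thue_morse (q + 2)" "thue_morse (p + 3) = thue_morse (q + 3)"
      by (rule l, simp)+
    moreover have "p + 0 = 2 * a" "p + 1 = Suc (2 * a)" "p + 2 = 2 * Suc a" "p + 3 = Suc (2 * Suc a)"
      "q + 0 = Suc (2 * b)" "q + 1 = 2 * Suc b" "q + 2 = Suc (2 * Suc b)" "q + 3 = 2 * Suc (Suc b)"
      using p q by simp_all
    ultimately have "thue_morse a = (\<not> thue_morse b)" "(\<not> thue_morse a) = thue_morse (Suc b)"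
      "thue_morse (Suc a) = (\<not> thue_morse (Suc b))"
      "(\<not> thue_morse (Suc a)) = thue_morse (Suc (Suc b))"
      by (simp_all only: thue_morse_double thue_morse_double_plus_1)
    then show False
      using thue_morse_not_three_equal[of b] by simp
  qed
  then show ?thesis
    using assms(1) tm_factors_eq_sym by (metis evenE oddE)
qed

lemma tm_factors_eq_half:
  assumes "tm_factors_eq p q n" "even p \<longleftrightarrow> even q"
  shows "tm_factors_eq (p div 2) (q div 2) ((n + 1) div 2)"
  unfolding tm_factors_eq_def
proof (intro allI impI)
  fix s assume "s < (n + 1) div 2"
  then have "2 * s < n" by linarith
  then have t: "thue_morse (p + 2 * s) = thue_morse (q + 2 * s)"
    using assms(1) by (auto simp: tm_factors_eq_def)
  show "thue_morse (p div 2 + s) = thue_morse (q div 2 + s)"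
  proof (cases "even p")
    case True
    then have "p + 2 * s = 2 * (p div 2 + s)" "q + 2 * s = 2 * (q div 2 + s)"
      using assms(2) by auto
    then show ?thesis using t by (metis thue_morse_double)
  next
    case False
    then have "p + 2 * s = Suc (2 * (p div 2 + s))" "q + 2 * s = Suc (2 * (q div 2 + s))"
      using assms(2) by (auto elim!: oddE)
    then show ?thesis using t by (metis thue_morse_double_plus_1)
  qed
qed

theorem tm_factors_eq_imp_mod_pow2_eq:
  "tm_factors_eq p q n \<Longrightarrow> 3 * 2 ^ a + 1 \<le> n \<Longrightarrow> p mod 2 ^ Suc a = q mod 2 ^ Suc a"
proof (induction a arbitrary: p q n)
  case 0
  then show ?case
    using tm_factors_eq_even_iff by (simp add: mod_2_eq_odd)
next
  case (Suc a)
  have "(2::nat) \<le> 2 ^ Suc a"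
    using one_le_power[of "2::nat" a] by simp
  then have "4 \<le> n"
    using Suc.prems(2) by linarith
  then have parity: "even p \<longleftrightarrow> even q"
    using Suc.prems(1) tm_factors_eq_even_iff by blast
  have "3 * 2 ^ a + 1 \<le> (n + 1) div 2"
    using Suc.prems(2) by simp
  then have "p div 2 mod 2 ^ Suc a = q div 2 mod 2 ^ Suc a"
    using Suc.IH tm_factors_eq_half[OF Suc.prems(1) parity] by blast
  moreover have "x mod 2 ^ Suc (Suc a) = 2 * (x div 2 mod 2 ^ Suc a) + x mod 2" for x :: nat
    by (metis mod_mult2_eq power_Suc)
  ultimately show ?case
    using parity by (simp add: mod_2_eq_odd)
qed

lemma pow2_dvd_diff_if_mult_odd_mod_eq:
  assumes "i \<le> j" "odd m" "(i * m) mod 2 ^ c = (j * m) mod 2 ^ c"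
  shows "(2::nat) ^ c dvd j - i"
proof -
  have "2 ^ c dvd j * m - i * m"
    using assms(1,3) by (metis mod_eq_dvd_iff_nat mult_le_mono1)
  then have "2 ^ c dvd (j - i) * m"
    by (simp add: diff_mult_distrib)
  moreover have "coprime ((2::nat) ^ c) m"
    using assms(2) by simp
  ultimately show ?thesis
    by (simp add: coprime_dvd_mult_left_iff)
qed

lemma tm_prefix_antipower_if_shifted_blocks_differ:
  assumes m: "odd m" "3 * 2 ^ a + 1 \<le> m" and k: "k \<le> 2 * 2 ^ Suc a"
    and differ: "\<And>i. i + 2 ^ Suc a < k \<Longrightarrow> \<not> tm_factors_eq (i * m) (i * m + 2 ^ Suc a * m) m"
  shows "tm_prefix_antipower k m"
proof -
  have blocks_differ: "tm_factor (i * m + 1) ((i + 1) * m) \<noteq> tm_factor (j * m + 1) ((j + 1) * m)"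
    if "i < j" "j < k" for i j
  proof
    assume "tm_factor (i * m + 1) ((i + 1) * m) = tm_factor (j * m + 1) ((j + 1) * m)"
    then have eq: "tm_factors_eq (i * m) (j * m) m"
      by (intro tm_factors_eq_if_tm_factor_eq) (simp add: add.commute)
    then have "2 ^ Suc a dvd j - i"
      using tm_factors_eq_imp_mod_pow2_eq[OF eq m(2)] m(1) \<open>i < j\<close>
        pow2_dvd_diff_if_mult_odd_mod_eq[of i j m "Suc a"]
      by simp
    then obtain t where t: "j - i = 2 ^ Suc a * t" ..
    have "2 ^ Suc a * t < 2 ^ Suc a * 2"
      using t that k by (simp only: mult.commute[of "2 ^ Suc a" 2])
    then have "t < 2"
      using mult_less_cancel1 by blast
    moreover have "t \<noteq> 0"
      using t \<open>i < j\<close> by (metis mult_0_right zero_less_diff less_irrefl)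
    ultimately have "j = i + 2 ^ Suc a"
      using t \<open>i < j\<close> by (simp add: less_2_cases_iff)
    then show False
      using differ[of i] eq \<open>j < k\<close> by (simp add: algebra_simps)
  qed
  show ?thesis
    unfolding tm_prefix_antipower_def
    using blocks_differ by (metis linorder_neq_iff)
qed

lemma exists_in_window_with_div:
  fixes A c m p v :: nat
  assumes "0 < A" "c * A < m" "p div A \<le> v" "v \<le> p div A + c"
  shows "\<exists>N. p \<le> N \<and> N < p + m \<and> N div A = v"
proof (cases "v = p div A")
  case True
  have "0 < m" using assms(2) by linarith
  then show ?thesis using True by auto
next
  case False
  have "A * (p div A) \<le> p" "p < A * (p div A) + A"
    using assms(1) dividend_less_times_div[of A p] by simp_all
  moreover have "A * (p div A) + A \<le> A * v"
    using False assms(3) mult_le_mono2[of "p div A + 1" v A] by simp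
  moreover have "A * v \<le> A * (p div A) + c * A"
    using assms(4) mult_le_mono2[of v "p div A + c" A] by (simp add: algebra_simps)
  ultimately have "p \<le> A * v" "A * v < p + m"
    using assms(2) by linarith+
  then show ?thesis
    using assms(1) by (intro exI[of _ "A * v"]) simp
qed

lemma shifted_blocks_differ_3X_plus_1:
  fixes X :: nat
  assumes X: "X = 2 ^ s" and m: "m = 3 * X + 1" and L: "p + 2 * X * m + m \<le> 10 * X * X"
  shows "\<not> tm_factors_eq p (p + 2 * X * m) m"
proof -
  define A B :: nat where "A = 2 * X" and "B = 2 * X * X"
  have A: "A = 2 ^ Suc s" and B: "B = 2 ^ Suc (2 * s)"
    by (simp_all add: A_def B_def X mult_2[of s] power_add)
  obtain v where "p div A \<le> v" "v \<le> p div A + 1" "even v"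
    using that[of "p div A"] that[of "p div A + 1"] by (cases "even (p div A)") auto
  then obtain N where N: "p \<le> N" "N < p + m" and v: "N div A = v"
    using exists_in_window_with_div[of A 1 m p v] by (auto simp: A_def X m)
  note split_A = thue_morse_add_pow2_mult_div_mod[of N "Suc s", folded A]
  note split_B = thue_morse_add_pow2_mult_div_mod[of "N + A" "Suc (2 * s)", folded B]
  \<comment> \<open>one step of length \<open>A\<close> flips the letter, the remaining \<open>3B\<close> does not\<close>
  have "thue_morse (N + A) \<noteq> thue_morse N"
    using split_A[of 1] split_A[of 0] \<open>even v\<close> by (auto simp: v elim!: evenE)
  moreover have "N + A < 2 * B"
    using L N(2) by (simp add: A_def B_def m algebra_simps)
  then have "(N + A) div B < 2"
    by (simp add: less_mult_imp_div_less mult.commute)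
  then have "thue_morse (N + A + B * 3) = thue_morse (N + A)"
    using split_B[of 3] split_B[of 0] by (auto simp: less_2_cases_iff thue_morse_small[unfolded One_nat_def])
  moreover have "N + A + B * 3 = N + 2 * X * m"
    by (simp add: A_def B_def m algebra_simps)
  ultimately show ?thesis
    using not_tm_factors_eq_shift[OF N] by metis
qed

lemma shifted_blocks_differ_2X_plus_3:
  fixes X :: nat
  assumes X: "X = 2 ^ s" and m: "m = 2 * X + 3" and L: "p + X * m + m \<le> 4 * X * X"
  shows "\<not> tm_factors_eq p (p + X * m) m"
proof -
  define B :: nat where "B = 2 * X * X"
  have B: "B = 2 ^ Suc (2 * s)"
    by (simp add: B_def X mult_2[of s] power_add)
  obtain v where "p div X \<le> v" "v \<le> p div X + 2" and v3: "thue_morse (v + 3) = thue_morse v"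
    using exists_thue_morse_eq_add_3 by blast
  then obtain N where N: "p \<le> N" "N < p + m" and v: "N div X = v"
    using exists_in_window_with_div[of X 2 m p v] by (auto simp: X m)
  note split_X = thue_morse_add_pow2_mult_div_mod[of N s, folded X]
  \<comment> \<open>the shift by \<open>3X\<close> keeps the letter, the remaining \<open>B\<close> flips it\<close>
  have "thue_morse (N + X * 3) = thue_morse N"
    using split_X[of 3] split_X[of 0] v3 by (simp add: v)
  moreover have "N + X * 3 < B"
    using L N(2) by (simp add: B_def m algebra_simps)
  then have "thue_morse (N + X * 3 + B * 1) = (\<not> thue_morse (N + X * 3))"
    using thue_morse_add_pow2_mult[of "N + X * 3" "Suc (2 * s)" 1, folded B]
    by (simp add: thue_morse_small[unfolded One_nat_def])
  moreover have "N + X * 3 + B * 1 = N + X * m"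
    by (simp add: B_def m algebra_simps)
  ultimately show ?thesis
    using not_tm_factors_eq_shift[OF N] by metis
qed

lemma tm_prefix_antipower_3X_plus_1:
  fixes X :: nat
  assumes "X = 2 ^ Suc s" and m: "m = 3 * X + 1" and L: "k * m \<le> 10 * X * X"
  shows "tm_prefix_antipower k m"
proof (rule tm_prefix_antipower_if_shifted_blocks_differ)
  show "odd m" "3 * 2 ^ Suc s + 1 \<le> m"
    using assms(1) m by simp_all
  have "k < 4 * X + 1"
  proof (rule ccontr)
    assume "\<not> k < 4 * X + 1"
    then have "(4 * X + 1) * m \<le> k * m" by (intro mult_le_mono1) simp
    then show False using L m by (simp add: algebra_simps)
  qed
  then show "k \<le> 2 * 2 ^ Suc (Suc s)"
    using assms(1) by simp
  show "\<not> tm_factors_eq (i * m) (i * m + 2 ^ Suc (Suc s) * m) m" if "i + 2 ^ Suc (Suc s) < k" for i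
  proof -
    have "(i + 2 * X + 1) * m \<le> k * m"
      using that assms(1) by (intro mult_le_mono1) simp
    then show ?thesis
      using shifted_blocks_differ_3X_plus_1[OF assms(1) m, of "i * m"] L assms(1)
      by (simp add: algebra_simps)
  qed
qed

lemma tm_prefix_antipower_2X_plus_3:
  fixes X :: nat
  assumes "X = 2 ^ Suc a" and m: "m = 2 * X + 3" and L: "k * m \<le> 4 * X * X"
  shows "tm_prefix_antipower k m"
proof (rule tm_prefix_antipower_if_shifted_blocks_differ)
  show "odd m" "3 * 2 ^ a + 1 \<le> m"
    using assms(1) m by simp_all
  have "k < 2 * X + 1"
  proof (rule ccontr)
    assume "\<not> k < 2 * X + 1"
    then have "(2 * X + 1) * m \<le> k * m" by (intro mult_le_mono1) simp
    then show False using L m by (simp add: algebra_simps)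
  qed
  then show "k \<le> 2 * 2 ^ Suc a"
    using assms(1) by simp
  show "\<not> tm_factors_eq (i * m) (i * m + 2 ^ Suc a * m) m" if "i + 2 ^ Suc a < k" for i
  proof -
    have "(i + X + 1) * m \<le> k * m"
      using that assms(1) by (intro mult_le_mono1) simp
    then show ?thesis
      using shifted_blocks_differ_2X_plus_3[OF assms(1) m, of "i * m"] L assms(1)
      by (simp add: algebra_simps)
  qed
qed

lemma not_tm_prefix_antipower_pow2: "\<not> tm_prefix_antipower (2 ^ m + 1) m"
proof
  define blocks where "blocks = {xs. set xs \<subseteq> {0::nat, 1} \<and> length xs = m}"
  define block where "block i = tm_factor (i * m + 1) ((i + 1) * m)" for i
  assume "tm_prefix_antipower (2 ^ m + 1) m"
  then have "inj_on block {..<2 ^ m + 1}"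
    unfolding inj_on_def tm_prefix_antipower_def block_def by blast
  moreover have "block ` {..<2 ^ m + 1} \<subseteq> blocks"
    by (auto simp: blocks_def block_def tm_factor_def tm_def simp del: upt_Suc)
  moreover have "finite blocks"
    unfolding blocks_def by (rule finite_lists_length_eq) simp
  ultimately have "card {..<(2::nat) ^ m + 1} \<le> card blocks"
    by (rule card_inj_on_le)
  moreover have "card blocks = 2 ^ m"
    unfolding blocks_def by (subst card_lists_length_eq) (simp_all add: numeral_2_eq_2)
  ultimately show False
    by (simp only: card_lessThan)
qed

lemma less_KK_divide:
  assumes "\<And>k. 0 < k \<Longrightarrow> k * m \<le> L \<Longrightarrow> tm_prefix_antipower k m"
  shows "real L / real m < real (KK m)"
proof -
  have "\<exists>k. 0 < k \<and> \<not> tm_prefix_antipower k m"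
    using not_tm_prefix_antipower_pow2 by (intro exI[of _ "2 ^ m + 1"]) simp
  then have K: "0 < KK m \<and> \<not> tm_prefix_antipower (KK m) m"
    unfolding KK_def by (rule LeastI_ex)
  have "L < KK m * m"
  proof (rule ccontr)
    assume "\<not> L < KK m * m"
    then have "tm_prefix_antipower (KK m) m"
      using K by (intro assms) simp_all
    then show False
      using K by simp
  qed
  then have "0 < m"
    by (cases m) simp_all
  moreover have "real L < real (KK m) * real m"
    using \<open>L < KK m * m\<close> by (simp only: of_nat_less_iff flip: of_nat_mult)
  ultimately show ?thesis
    by (simp add: pos_divide_less_eq)
qed

theorem lemma9:
  fixes l :: nat
  assumes "l \<ge> 3"
  shows "real (KK (3 * 2^(l-2) + 1)) > 5 * 2^(2*l-3) / (3 * 2^(l-2) + 1)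
       \<and> real (KK (2^(l-1) + 3)) > 2^(2*l-2) / (2^(l-1) + 3)"
proof -
  obtain a where l: "l = a + 3"
    using assms by (metis add.commute le_add_diff_inverse)
  define X :: nat where "X = 2 ^ Suc a"
  have "l - 2 = Suc a" "l - 1 = Suc (Suc a)" "2 * l - 3 = Suc (Suc a + Suc a)"
    "2 * l - 2 = Suc (Suc (Suc a + Suc a))"
    using l by simp_all
  then have pow: "(2::nat) ^ (l - 2) = X" "(2::nat) ^ (l - 1) = 2 * X"
    "(2::real) ^ (l - 2) = real X" "(2::real) ^ (l - 1) = 2 * real X"
    "(2::real) ^ (2 * l - 3) = 2 * real X * real X" "(2::real) ^ (2 * l - 2) = 4 * real X * real X"
    by (simp_all add: X_def power_add)
  have "real (10 * X * X) = 5 * (2 * real X * real X)" "real (3 * X + 1) = 3 * real X + 1"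
    "real (4 * X * X) = 4 * real X * real X" "real (2 * X + 3) = 2 * real X + 3"
    by simp_all
  moreover have "real (10 * X * X) / real (3 * X + 1) < real (KK (3 * X + 1))"
    by (rule less_KK_divide, rule tm_prefix_antipower_3X_plus_1[OF X_def]) simp_all
  moreover have "real (4 * X * X) / real (2 * X + 3) < real (KK (2 * X + 3))"
    by (rule less_KK_divide, rule tm_prefix_antipower_2X_plus_3[OF X_def]) simp_all
  ultimately show ?thesis
    unfolding pow by (simp only:)
qed

end
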